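(* Let $B$ be a C*-algebra and $A\subseteq B$ a closed *-subalgebra satisfying the ideal intersection property and axiom (inv) relative to $B$. Then for every closed two-sided ideal $J$ of $B$: (i) $\mathrm{Ann}_B(J\cap A)=\mathrm{Ann}_B(J)$, and (ii) $\mathrm{Ann}_A(J\cap A)=\mathrm{Ann}_B(J)\cap A$.
   Context: For a C*-algebra $C$ and $S\subseteq C$, $[S]$ is the closed linear span, and $S$ is $C$-invariant if $[SC]=[CS]$. For $C$-invariant $S$, $\{x\in C: xs=0\ \forall s\in S\}=\{x\in C: sx=0\ \forall s\in S\}$, denoted $\mathrm{Ann}_C(S)$. $A$ satisfies the ideal intersection property relative to $B$ if $J\cap A\neq\{0\}$ for every nonzero closed two-sided ideal $J$ of $B$. $A$ satisfies axiom (inv) relative to $B$ if $J\cap A$ is $B$-invariant for every closed two-sided ideal $J$ of $B$. *)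

theory Defs
  imports "HOL-Analysis.Analysis"
begin

class cstar_algebra = real_normed_algebra + banach +
  fixes adj :: "'a \<Rightarrow> 'a"
    and cscale :: "complex \<Rightarrow> 'a \<Rightarrow> 'a"
  assumes cscale_of_real: "cscale (complex_of_real r) x = scaleR r x"
    and cscale_add_left: "cscale (a + b) x = cscale a x + cscale b x"
    and cscale_add_right: "cscale a (x + y) = cscale a x + cscale a y"
    and cscale_cscale: "cscale a (cscale b x) = cscale (a * b) x"
    and cscale_mult_left: "cscale a (x * y) = cscale a x * y"
    and cscale_mult_right: "cscale a (x * y) = x * cscale a y"
    and norm_cscale: "norm (cscale a x) = cmod a * norm x"
    and adj_adj: "adj (adj x) = x"
    and adj_add: "adj (x + y) = adj x + adj y"
    and adj_cscale: "adj (cscale a x) = cscale (cnj a) (adj x)"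
    and adj_mult: "adj (x * y) = adj y * adj x"
    and cstar_identity: "norm (adj x * x) = (norm x)\<^sup>2"

definition cspan :: "'a::cstar_algebra set \<Rightarrow> 'a set" where
  "cspan S = {x. \<exists>F c. finite F \<and> F \<subseteq> S \<and> x = (\<Sum>s\<in>F. cscale (c s) s)}"

definition clspan :: "'a::cstar_algebra set \<Rightarrow> 'a set" where
  "clspan S = closure (cspan S)"

definition invariant :: "'a::cstar_algebra set \<Rightarrow> 'a set \<Rightarrow> bool" where
  "invariant C S \<longleftrightarrow>
     clspan {s * c | s c. s \<in> S \<and> c \<in> C} = clspan {c * s | s c. s \<in> S \<and> c \<in> C}"

text \<open>Annihilator (for invariant S, left and right annihilators agree; we use
  the first description from the paper).\<close>
definition Ann :: "'a::cstar_algebra set \<Rightarrow> 'a set \<Rightarrow> 'a set" where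
  "Ann C S = {x \<in> C. \<forall>s\<in>S. x * s = 0}"

definition complex_subspace :: "'a::cstar_algebra set \<Rightarrow> bool" where
  "complex_subspace S \<longleftrightarrow> 0 \<in> S \<and> (\<forall>x\<in>S. \<forall>y\<in>S. x + y \<in> S)
     \<and> (\<forall>a. \<forall>x\<in>S. cscale a x \<in> S)"

definition closed_star_subalgebra :: "'a::cstar_algebra set \<Rightarrow> bool" where
  "closed_star_subalgebra A \<longleftrightarrow> complex_subspace A \<and> closed A
     \<and> (\<forall>x\<in>A. \<forall>y\<in>A. x * y \<in> A) \<and> (\<forall>x\<in>A. adj x \<in> A)"

text \<open>Closed two-sided ideal of the ambient C*-algebra (the whole type).\<close>
definition closed_ideal :: "'a::cstar_algebra set \<Rightarrow> bool" where
  "closed_ideal J \<longleftrightarrow> complex_subspace J \<and> closed J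
     \<and> (\<forall>x\<in>J. \<forall>c. c * x \<in> J \<and> x * c \<in> J)"

definition ideal_intersection_property :: "'a::cstar_algebra set \<Rightarrow> bool" where
  "ideal_intersection_property A \<longleftrightarrow>
     (\<forall>J. closed_ideal J \<and> J \<noteq> {0} \<longrightarrow> J \<inter> A \<noteq> {0})"

definition axiom_inv :: "'a::cstar_algebra set \<Rightarrow> bool" where
  "axiom_inv A \<longleftrightarrow> (\<forall>J. closed_ideal J \<longrightarrow> invariant UNIV (J \<inter> A))"

end

theory Submission
  imports Defs
begin

text \<open>Let K = Ann(J \<inter> A). It is always a closed left ideal, and axiom (inv) makes it
  two-sided: c s lies in [B(J \<inter> A)] = [(J \<inter> A)B], which K annihilates. The C*-identity
  gives K \<inter> J \<inter> A = 0: for y there, y^* y lies in J \<inter> A, so y y^* y = 0 and hence y = 0.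
  The ideal intersection property then yields K \<inter> J = 0, so K J \<subseteq> K \<inter> J = 0, i.e.
  K \<subseteq> Ann(J).\<close>

lemma cscale_zero_right [simp]: "cscale a (0::'a::cstar_algebra) = 0"
  by (metis cscale_mult_left mult_zero_right)

lemma mem_Ann_UNIV: "x \<in> Ann UNIV S \<longleftrightarrow> (\<forall>s\<in>S. x * s = 0)"
  unfolding Ann_def by simp

lemma Ann_eq_Ann_UNIV_Int: "Ann C S = Ann UNIV S \<inter> C"
  unfolding Ann_def by auto

lemma Ann_antimono: "S \<subseteq> T \<Longrightarrow> Ann C T \<subseteq> Ann C S"
  unfolding Ann_def by auto

lemma closed_left_annihilator: "closed {t::'a::real_normed_algebra. x * t = 0}"
  by (intro closed_Collect_eq continuous_intros)

lemma closed_right_annihilator: "closed {t::'a::real_normed_algebra. t * x = 0}"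
  by (intro closed_Collect_eq continuous_intros)

lemma subset_clspan: "S \<subseteq> clspan S"
proof
  fix s assume "s \<in> S"
  then have "s \<in> cspan S"
    unfolding cspan_def
    by (intro CollectI exI[of _ "{s}"] exI[of _ "\<lambda>_. 1"])
       (simp add: cscale_of_real[of 1, simplified])
  then show "s \<in> clspan S"
    unfolding clspan_def using closure_subset by blast
qed

lemma annihilates_clspan:
  fixes x :: "'a::cstar_algebra"
  assumes "\<forall>s\<in>S. x * s = 0" and "t \<in> clspan S"
  shows "x * t = 0"
proof -
  have "cspan S \<subseteq> {t. x * t = 0}"
  proof
    fix t assume "t \<in> cspan S"
    then obtain F c where F: "finite F" "F \<subseteq> S" "t = (\<Sum>s\<in>F. cscale (c s) s)"
      unfolding cspan_def by blast
    have "x * t = (\<Sum>s\<in>F. cscale (c s) (x * s))"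
      using F by (simp add: sum_distrib_left cscale_mult_right)
    also have "\<dots> = 0"
      using F assms(1) by (auto intro!: sum.neutral)
    finally show "t \<in> {t. x * t = 0}" by simp
  qed
  then have "clspan S \<subseteq> {t. x * t = 0}"
    unfolding clspan_def using closed_left_annihilator by (rule closure_minimal)
  then show ?thesis using assms(2) by auto
qed

lemma closed_Ann_UNIV: "closed (Ann UNIV S)"
proof -
  have "Ann UNIV S = (\<Inter>s\<in>S. {x. x * s = 0})"
    by (auto simp: mem_Ann_UNIV)
  then show ?thesis
    by (auto intro!: closed_INT closed_right_annihilator)
qed

lemma complex_subspace_Ann_UNIV: "complex_subspace (Ann UNIV S)"
  unfolding complex_subspace_def
  by (auto simp: mem_Ann_UNIV distrib_right simp flip: cscale_mult_left)

lemma mult_left_mem_Ann_UNIV: "x \<in> Ann UNIV S \<Longrightarrow> c * x \<in> Ann UNIV S"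
  unfolding mem_Ann_UNIV by (simp add: mult.assoc)

lemma mult_right_mem_Ann_UNIV:
  assumes "invariant UNIV S" and x: "x \<in> Ann UNIV S"
  shows "x * c \<in> Ann UNIV S"
proof -
  have "x * (c * s) = 0" if "s \<in> S" for s
  proof -
    have "c * s \<in> {c * s | s c. s \<in> S \<and> c \<in> UNIV}"
      using that by blast
    then have "c * s \<in> clspan {c * s | s c. s \<in> S \<and> c \<in> UNIV}"
      by (rule subsetD[OF subset_clspan])
    then have "c * s \<in> clspan {s * c | s c. s \<in> S \<and> c \<in> UNIV}"
      using assms(1) unfolding invariant_def by simp
    moreover have "x * t = 0" if "t \<in> {s * c | s c. s \<in> S \<and> c \<in> UNIV}" for t
      using that x unfolding mem_Ann_UNIV by (auto simp flip: mult.assoc)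
    ultimately show ?thesis
      using annihilates_clspan by blast
  qed
  then show ?thesis
    unfolding mem_Ann_UNIV by (simp add: mult.assoc)
qed

lemma closed_ideal_Ann_UNIV: "invariant UNIV S \<Longrightarrow> closed_ideal (Ann UNIV S)"
  unfolding closed_ideal_def
  using closed_Ann_UNIV complex_subspace_Ann_UNIV mult_left_mem_Ann_UNIV mult_right_mem_Ann_UNIV
  by blast

lemma closed_ideal_mult_left: "closed_ideal J \<Longrightarrow> x \<in> J \<Longrightarrow> c * x \<in> J"
  unfolding closed_ideal_def by blast

lemma closed_ideal_mult_right: "closed_ideal J \<Longrightarrow> x \<in> J \<Longrightarrow> x * c \<in> J"
  unfolding closed_ideal_def by blast

lemma closed_ideal_Int:
  "closed_ideal I \<Longrightarrow> closed_ideal J \<Longrightarrow> closed_ideal (I \<inter> J)"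
  unfolding closed_ideal_def complex_subspace_def by auto

lemma mult_adj_mult_self_eq_0_iff:
  fixes y :: "'a::cstar_algebra"
  shows "y * (adj y * y) = 0 \<longleftrightarrow> y = 0"
proof
  assume y: "y * (adj y * y) = 0"
  define z where "z = adj y * y"
  have "adj z = z" unfolding z_def by (simp add: adj_mult adj_adj)
  moreover have "z * z = 0"
    using y unfolding z_def by (metis mult.assoc mult_zero_right)
  ultimately have "z = 0" using cstar_identity[of z] by simp
  then show "y = 0" using cstar_identity[of y] unfolding z_def by simp
qed simp

lemma Ann_UNIV_Int_self_subset_zero:
  fixes S :: "'a::cstar_algebra set"
  assumes "\<And>y. y \<in> S \<Longrightarrow> adj y * y \<in> S"
  shows "Ann UNIV S \<inter> S \<subseteq> {0}"
proof
  fix y assume "y \<in> Ann UNIV S \<inter> S"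
  then have "y * (adj y * y) = 0" using assms by (simp add: mem_Ann_UNIV)
  then show "y \<in> {0}" by (simp add: mult_adj_mult_self_eq_0_iff)
qed

lemma adj_mult_self_mem_ideal_Int_subalgebra:
  assumes "closed_star_subalgebra A" and "closed_ideal J" and "y \<in> J \<inter> A"
  shows "adj y * y \<in> J \<inter> A"
  using assms unfolding closed_star_subalgebra_def closed_ideal_def by auto

lemma ideal_intersection_propertyD:
  assumes "ideal_intersection_property A" and "0 \<in> A"
    and "closed_ideal I" and "I \<inter> A \<subseteq> {0}"
  shows "I \<subseteq> {0}"
  using assms unfolding ideal_intersection_property_def closed_ideal_def complex_subspace_def
  by blast

lemma subset_Ann_UNIV_if_Int_zero:
  assumes "closed_ideal K" and "closed_ideal J" and "K \<inter> J \<subseteq> {0}"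
  shows "K \<subseteq> Ann UNIV J"
proof
  fix x assume "x \<in> K"
  have "x * j \<in> K \<inter> J" if "j \<in> J" for j
    using \<open>x \<in> K\<close> that assms(1,2) by (simp add: closed_ideal_mult_left closed_ideal_mult_right)
  then show "x \<in> Ann UNIV J"
    using assms(3) by (auto simp: mem_Ann_UNIV)
qed

theorem corollary3p4:
  fixes A J :: "'a::cstar_algebra set"
  assumes "closed_star_subalgebra A"
    and "ideal_intersection_property A"
    and "axiom_inv A"
    and "closed_ideal J"
  shows "Ann UNIV (J \<inter> A) = Ann UNIV J \<and> Ann A (J \<inter> A) = Ann UNIV J \<inter> A"
proof -
  define K where "K = Ann UNIV (J \<inter> A)"
  have "invariant UNIV (J \<inter> A)"
    using assms(3,4) unfolding axiom_inv_def by blast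
  then have K_ideal: "closed_ideal K"
    unfolding K_def by (rule closed_ideal_Ann_UNIV)
  have "0 \<in> A"
    using assms(1) unfolding closed_star_subalgebra_def complex_subspace_def by blast
  moreover have "closed_ideal (K \<inter> J)"
    using K_ideal assms(4) by (rule closed_ideal_Int)
  moreover have "K \<inter> (J \<inter> A) \<subseteq> {0}"
    unfolding K_def using adj_mult_self_mem_ideal_Int_subalgebra[OF assms(1,4)]
    by (rule Ann_UNIV_Int_self_subset_zero)
  then have "K \<inter> J \<inter> A \<subseteq> {0}"
    by (simp only: Int_assoc)
  ultimately have "K \<inter> J \<subseteq> {0}"
    by (rule ideal_intersection_propertyD[OF assms(2)])
  then have "K \<subseteq> Ann UNIV J"
    by (rule subset_Ann_UNIV_if_Int_zero[OF K_ideal assms(4)])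
  moreover have "Ann UNIV J \<subseteq> K"
    unfolding K_def by (rule Ann_antimono) (rule Int_lower1)
  ultimately have "Ann UNIV (J \<inter> A) = Ann UNIV J"
    unfolding K_def by (rule subset_antisym)
  moreover have "Ann A (J \<inter> A) = Ann UNIV (J \<inter> A) \<inter> A"
    by (rule Ann_eq_Ann_UNIV_Int)
  ultimately show ?thesis
    by simp
qed

end
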